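(* Let $\Omega=(0,1)^2$, let $N$ be an even positive integer, $h=1/N$, and let $\mathcal T_h=\{Q_{jk}\}_{j,k=1}^N$ be the uniform partition of $\Omega$ into squares $Q_{jk}=((j-1)h,jh)\times((k-1)h,kh)$. Let real coefficients $\xi_{jk},\eta_{jk}$ ($1\le j,k\le N-1$) be given and set $$\mathbf u_h=\sum_{j,k=1}^{N-1}\binom{\xi_{jk}}{\eta_{jk}}\phi_{jk}+\binom{1/2}{0}\Big[\sum_{j=1}^{N-1}\phi_{j,N}+\psi_{2,TL}+\psi_{2,TR}\Big],$$ with $\phi_{jk}$, $\psi_{2,TL}$, $\psi_{2,TR}$ as described in the context. Suppose that $$\sum_{Q\in\mathcal T_h}\int_Q(\nabla\cdot\mathbf u_h)\,q_h\,d\mathbf x=0\qquad\text{for all } q_h\in\widetilde{\mathscr P}_0^h .$$ Then $$\Big|\int_{Q_{jk}}\nabla\cdot\mathbf u_h\,d\mathbf x\Big|=h^3\qquad\text{for all } Q_{jk}\in\mathcal T_h,$$ and these integrals alternate in sign in a checkerboard pattern: there is a number $\gamma$ with $|\gamma|=h^3$ such that $\int_{Q_{jk}}\nabla\cdot\mathbf u_h\,d\mathbf x=\gamma$ whenever $j+k$ is even and $=-\gamma$ whenever $j+k$ is odd.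
   Context: Divergence and gradients are taken elementwise on each square $Q\in\mathcal T_h$. Nonconforming $P_1$ basis functions: for a vertex $V_{jk}=(jh,kh)$ with $1\le j\le N-1$, $1\le k\le N$, $\phi_{jk}$ is the function which on each square $Q\in\mathcal T_h$ is a polynomial of degree at most one, is supported on the (at most four) squares having $V_{jk}$ as a vertex, and on each such square takes the value $1$ at the midpoints of the two edges of that square having $V_{jk}$ as an endpoint and the value $0$ at the midpoints of the other two edges. (So for $k\le N-1$ these are the usual basis functions of the $P_1$-nonconforming quadrilateral space vanishing at boundary edge midpoints; $\phi_{j,N}$, attached to a vertex on the top side $y=1$, is supported on $Q_{j,N}\cup Q_{j+1,N}$ and equals $1$ at the top-edge midpoints $((j-\tfrac12)h,1)$, $((j+\tfrac12)h,1)$.) DSSY corner functions: on the reference square $\widehat Q=[-1,1]^2$ let $\theta(t)=t^2-\tfrac53 t^4$ and $\widehat\psi_2(\widehat x,\widehat y)=\tfrac14+\tfrac12\widehat y+\tfrac38\big(\theta(\widehat x)-\theta(\widehat y)\big)$, which equals $1$ at the edge midpoint $(0,1)$ and $0$ at the edge midpoints $(1,0),(-1,0),(0,-1)$. For a square $Q$ with center $c_Q$ let $F_Q(\widehat x,\widehat y)=c_Q+\tfrac h2(\widehat x,\widehat y)$. Then $\psi_{2,TL}=\widehat\psi_2\circ F_{Q_{1N}}^{-1}$ on $Q_{1N}$ and $0$ elsewhere, and $\psi_{2,TR}=\widehat\psi_2\circ F_{Q_{NN}}^{-1}$ on $Q_{NN}$ and $0$ elsewhere (the top-left and top-right corner squares).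 Pressure space: call $Q_{jk}$ red if $j+k$ is even and black if $j+k$ is odd, and let $\Omega^R,\Omega^B$ be the unions of red, respectively black, squares. $\widetilde{\mathscr P}_0^h$ is the space of functions that are constant on each $Q_{jk}$ and satisfy $\int_{\Omega^R}q_h\,d\mathbf x=0$ and $\int_{\Omega^B}q_h\,d\mathbf x=0$ (equivalently, the direct sum of the mean-zero piecewise constants supported on red squares and those supported on black squares; its dimension is $N^2-2$). *)

theory Defs
  imports "HOL-Analysis.Analysis"
begin

definition mesh :: "nat \<Rightarrow> real" where
  "mesh N = 1 / real N"

definition sq :: "nat \<Rightarrow> nat \<Rightarrow> nat \<Rightarrow> (real \<times> real) set" where
  "sq N j k = box ((real j - 1) * mesh N, (real k - 1) * mesh N) (real j * mesh N, real k * mesh N)"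

definition center :: "nat \<Rightarrow> nat \<Rightarrow> nat \<Rightarrow> real \<times> real" where
  "center N j k = ((real j - 1/2) * mesh N, (real k - 1/2) * mesh N)"

definition vert :: "nat \<Rightarrow> nat \<Rightarrow> nat \<Rightarrow> real \<times> real" where
  "vert N j k = (real j * mesh N, real k * mesh N)"

text \<open>On a square with center c and side h, the polynomial of degree at most one
  taking value 1 at the midpoints of the two edges having the vertex V as an endpoint
  and 0 at the two other edge midpoints (see lemmas loc_phi_mid_* below).\<close>
definition loc_phi :: "real \<Rightarrow> real \<times> real \<Rightarrow> real \<times> real \<Rightarrow> real \<times> real \<Rightarrow> real" where
  "loc_phi h V c p = 1/2 + 2 * ((fst V - fst c) * (fst p - fst c)
                               + (snd V - snd c) * (snd p - snd c)) / h^2"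

lemma loc_phi_mid_values:
  fixes h sx sy cx cy :: real
  assumes "h \<noteq> 0" "sx \<in> {-1,1}" "sy \<in> {-1,1}"
  shows "loc_phi h (cx + h/2 * sx, cy + h/2 * sy) (cx, cy) (cx + h/2 * sx, cy) = 1"
    and "loc_phi h (cx + h/2 * sx, cy + h/2 * sy) (cx, cy) (cx, cy + h/2 * sy) = 1"
    and "loc_phi h (cx + h/2 * sx, cy + h/2 * sy) (cx, cy) (cx - h/2 * sx, cy) = 0"
    and "loc_phi h (cx + h/2 * sx, cy + h/2 * sy) (cx, cy) (cx, cy - h/2 * sy) = 0"
  using assms by (auto simp: loc_phi_def power2_eq_square field_simps)

text \<open>Nonconforming P1 basis function attached to V_jk: on each square Q_{j'k'}
  of the mesh having V_jk as a vertex (j' in {j,j+1}, k' in {k,k+1}) it is the local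
  function above; it vanishes elsewhere (values on the square boundaries,
  a null set, are irrelevant and set to 0).\<close>
definition phi :: "nat \<Rightarrow> nat \<Rightarrow> nat \<Rightarrow> real \<times> real \<Rightarrow> real" where
  "phi N j k p = (\<Sum>jk' \<in> ({1..N} \<times> {1..N}) \<inter> ({j, j+1} \<times> {k, k+1}).
      indicator (sq N (fst jk') (snd jk')) p *
      loc_phi (mesh N) (vert N j k) (center N (fst jk') (snd jk')) p)"

definition theta :: "real \<Rightarrow> real" where
  "theta t = t^2 - 5/3 * t^4"

definition psi2_hat :: "real \<times> real \<Rightarrow> real" where
  "psi2_hat xy = 1/4 + 1/2 * snd xy + 3/8 * (theta (fst xy) - theta (snd xy))"

text \<open>Inverse of F_Q(xh,yh) = c_Q + (h/2)(xh,yh).\<close>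
definition Finv :: "nat \<Rightarrow> nat \<Rightarrow> nat \<Rightarrow> real \<times> real \<Rightarrow> real \<times> real" where
  "Finv N j k p = ((2 / mesh N) * (fst p - fst (center N j k)),
                   (2 / mesh N) * (snd p - snd (center N j k)))"

definition psi2_TL :: "nat \<Rightarrow> real \<times> real \<Rightarrow> real" where
  "psi2_TL N p = indicator (sq N 1 N) p * psi2_hat (Finv N 1 N p)"

definition psi2_TR :: "nat \<Rightarrow> real \<times> real \<Rightarrow> real" where
  "psi2_TR N p = indicator (sq N N N) p * psi2_hat (Finv N N N p)"

definition uh1 :: "nat \<Rightarrow> (nat \<Rightarrow> nat \<Rightarrow> real) \<Rightarrow> real \<times> real \<Rightarrow> real" where
  "uh1 N xi p = (\<Sum>j=1..N-1. \<Sum>k=1..N-1. xi j k * phi N j k p)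
     + 1/2 * ((\<Sum>j=1..N-1. phi N j N p) + psi2_TL N p + psi2_TR N p)"

definition uh2 :: "nat \<Rightarrow> (nat \<Rightarrow> nat \<Rightarrow> real) \<Rightarrow> real \<times> real \<Rightarrow> real" where
  "uh2 N eta p = (\<Sum>j=1..N-1. \<Sum>k=1..N-1. eta j k * phi N j k p)"

text \<open>Elementwise divergence: at points interior to a square the piecewise
  function coincides locally with the polynomial on that square, so the partial
  derivatives there are the elementwise ones.\<close>
definition divh :: "nat \<Rightarrow> (nat \<Rightarrow> nat \<Rightarrow> real) \<Rightarrow> (nat \<Rightarrow> nat \<Rightarrow> real) \<Rightarrow> real \<times> real \<Rightarrow> real" where
  "divh N xi eta p = deriv (\<lambda>t. uh1 N xi (t, snd p)) (fst p)
                   + deriv (\<lambda>t. uh2 N eta (fst p, t)) (snd p)"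

text \<open>Pressure space: a piecewise constant q_h is given by its values q j k on
  Q_jk (1 \<le> j,k \<le> N); it lies in the space iff its integrals over the red
  (j+k even) and black (j+k odd) squares vanish.\<close>
definition pressure_space :: "nat \<Rightarrow> (nat \<Rightarrow> nat \<Rightarrow> real) \<Rightarrow> bool" where
  "pressure_space N q \<longleftrightarrow>
     (\<Sum>j=1..N. \<Sum>k=1..N. if even (j+k) then q j k * (mesh N)^2 else 0) = 0 \<and>
     (\<Sum>j=1..N. \<Sum>k=1..N. if odd (j+k) then q j k * (mesh N)^2 else 0) = 0"

end

theory Submission
  imports Defs
begin

text \<open>On each square \<open>Q_ab\<close> the velocity is a polynomial, and its elementwise divergence is a
  constant (\<open>div_on_cell\<close>) plus, on the two top corner squares, the \<open>x\<close>-derivative of the DSSY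
  function, which is odd about the centre of the square and hence integrates to zero; so the
  integral over \<open>Q_ab\<close> is \<open>h\<^sup>2 \<cdot> div_on_cell\<close>. Each \<open>\<phi>_jk\<close> has gradient \<open>N(\<plusminus>1,\<plusminus>1)\<close> on its four
  squares, so summing \<open>div_on_cell\<close> against a weight \<open>w\<close> is a discrete summation by parts. For
  \<open>w = 1\<close> everything cancels; for the checkerboard weight \<open>(-1)^(a+b)\<close> every interior basis function
  cancels as well and only the prescribed top-row coefficients \<open>1/2\<close> survive, giving \<open>-N\<close>.
  Testing the orthogonality with the difference of the indicators of two squares of the same
  colour shows that the integrals take one value \<open>R\<close> on red and one value \<open>B\<close> on black squares;
  the two sums then give \<open>B = -R\<close> and \<open>N\<^sup>2 R = -N h\<^sup>2\<close>, i.e. \<open>R = -h\<^sup>3\<close>.\<close>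

lemma mesh_pos: "N > 0 \<Longrightarrow> mesh N > 0"
  by (simp add: mesh_def)

lemma mem_sq:
  "p \<in> sq N a b \<longleftrightarrow>
     (real a - 1) * mesh N < fst p \<and> fst p < real a * mesh N \<and>
     (real b - 1) * mesh N < snd p \<and> snd p < real b * mesh N"
  by (cases p) (auto simp: sq_def mem_box Basis_prod_def)

lemma sq_index_unique:
  assumes "N > 0" "p \<in> sq N a b" "p \<in> sq N a' b'"
  shows "a = a' \<and> b = b'"
proof -
  have "i = i'" if "(real i - 1) * mesh N < t" "t < real i * mesh N"
    "(real i' - 1) * mesh N < t" "t < real i' * mesh N" for i i' t
  proof -
    have "(real i - 1) * mesh N < real i' * mesh N" "(real i' - 1) * mesh N < real i * mesh N"
      using that by linarith+
    then have "real i - 1 < real i'" "real i' - 1 < real i"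
      using mesh_pos[OF \<open>N > 0\<close>] by simp_all
    then show ?thesis
      by linarith
  qed
  then show ?thesis using assms(2,3) unfolding mem_sq by blast
qed

lemma indicator_sq:
  assumes "N > 0" "p \<in> sq N a b"
  shows "indicator (sq N a' b') p = (of_bool (a' = a \<and> b' = b) :: real)"
proof -
  have "p \<in> sq N a' b' \<longleftrightarrow> a' = a \<and> b' = b"
    using assms sq_index_unique by blast
  then show ?thesis
    by (simp add: indicator_def)
qed

lemma reflect_cbox_image:
  fixes a b :: "'a::euclidean_space"
  shows "(\<lambda>x. a + b - x) ` cbox a b = cbox a b"
proof -
  have "a + b - x \<in> cbox a b" if "x \<in> cbox a b" for x
    using that by (auto simp: mem_box inner_diff_left inner_add_left)
  then show ?thesis
    by (auto intro!: image_eqI[where x = "a + b - x" for x])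
qed

lemma has_integral_antisymmetric_zero:
  fixes f :: "'a::euclidean_space \<Rightarrow> 'b::real_normed_vector"
  assumes "f integrable_on cbox a b" and "\<And>x. f (a + b - x) = - f x"
  shows "(f has_integral 0) (cbox a b)"
proof -
  obtain I where I: "(f has_integral I) (cbox a b)"
    using assms(1) by blast
  have "((\<lambda>x. f ((-1) *\<^sub>R x + (a + b))) has_integral I) (cbox a b)"
    using has_integral_affinity[OF I, of "-1" "a + b"] by (simp add: reflect_cbox_image add.commute)
  then have "((\<lambda>x. - f x) has_integral I) (cbox a b)"
    by (simp add: assms(2))
  then have "I = - I"
    using has_integral_neg[OF I] has_integral_unique by blast
  then have "2 *\<^sub>R I = 0"
    by (metis add.right_inverse scaleR_2)
  with I show ?thesis
    by simp
qed

lemma eventually_nhds_Pair_left: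
  "open S \<Longrightarrow> (x, y) \<in> S \<Longrightarrow> eventually (\<lambda>t. (t, y) \<in> S) (nhds x)"
  by (rule topological_tendstoD) (auto intro: tendsto_Pair filterlim_ident)

lemma eventually_nhds_Pair_right:
  "open S \<Longrightarrow> (x, y) \<in> S \<Longrightarrow> eventually (\<lambda>t. (x, t) \<in> S) (nhds y)"
  by (rule topological_tendstoD) (auto intro: tendsto_Pair filterlim_ident)

definition phi_on_cell :: "nat \<Rightarrow> nat \<Rightarrow> nat \<Rightarrow> nat \<Rightarrow> nat \<Rightarrow> real \<times> real \<Rightarrow> real" where
  "phi_on_cell N j k a b p =
     (if a \<in> {j, j+1} \<and> b \<in> {k, k+1} then loc_phi (mesh N) (vert N j k) (center N a b) p else 0)"

definition dx_phi_on_cell :: "nat \<Rightarrow> nat \<Rightarrow> nat \<Rightarrow> nat \<Rightarrow> nat \<Rightarrow> real" where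
  "dx_phi_on_cell N j k a b =
     (if a \<in> {j, j+1} \<and> b \<in> {k, k+1} then (if a = j then real N else - real N) else 0)"

definition dy_phi_on_cell :: "nat \<Rightarrow> nat \<Rightarrow> nat \<Rightarrow> nat \<Rightarrow> nat \<Rightarrow> real" where
  "dy_phi_on_cell N j k a b =
     (if a \<in> {j, j+1} \<and> b \<in> {k, k+1} then (if b = k then real N else - real N) else 0)"

lemma phi_eq_phi_on_cell:
  assumes "N > 0" "a \<in> {1..N}" "b \<in> {1..N}" "p \<in> sq N a b"
  shows "phi N j k p = phi_on_cell N j k a b p"
proof -
  have "phi N j k p = (\<Sum>c \<in> ({1..N} \<times> {1..N}) \<inter> ({j, j+1} \<times> {k, k+1}).
      if c = (a, b) then loc_phi (mesh N) (vert N j k) (center N a b) p else 0)"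
    unfolding phi_def using assms by (intro sum.cong) (auto simp: indicator_sq)
  also have "\<dots> = phi_on_cell N j k a b p"
    using assms(2,3) by (auto simp: phi_on_cell_def)
  finally show ?thesis .
qed

lemma phi_on_cell_has_derivative_x:
  "((\<lambda>t. phi_on_cell N j k a b (t, y)) has_real_derivative dx_phi_on_cell N j k a b) (at x)"
proof -
  have "((\<lambda>t. loc_phi (mesh N) (vert N j k) (center N a b) (t, y)) has_real_derivative
          2 * (fst (vert N j k) - fst (center N a b)) / mesh N ^ 2) (at x)"
    unfolding loc_phi_def divide_inverse by (auto intro!: derivative_eq_intros)
  moreover have "2 * (fst (vert N j k) - fst (center N a b)) / mesh N ^ 2
      = (2 * real j - 2 * real a + 1) * real N"
    by (cases "N = 0") (simp_all add: vert_def center_def mesh_def power2_eq_square field_simps)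
  ultimately show ?thesis
    by (auto simp: phi_on_cell_def dx_phi_on_cell_def)
qed

lemma phi_on_cell_has_derivative_y:
  "((\<lambda>t. phi_on_cell N j k a b (x, t)) has_real_derivative dy_phi_on_cell N j k a b) (at y)"
proof -
  have "((\<lambda>t. loc_phi (mesh N) (vert N j k) (center N a b) (x, t)) has_real_derivative
          2 * (snd (vert N j k) - snd (center N a b)) / mesh N ^ 2) (at y)"
    unfolding loc_phi_def divide_inverse by (auto intro!: derivative_eq_intros)
  moreover have "2 * (snd (vert N j k) - snd (center N a b)) / mesh N ^ 2
      = (2 * real k - 2 * real b + 1) * real N"
    by (cases "N = 0") (simp_all add: vert_def center_def mesh_def power2_eq_square field_simps)
  ultimately show ?thesis
    by (auto simp: phi_on_cell_def dy_phi_on_cell_def)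
qed

definition dtheta :: "real \<Rightarrow> real" where
  "dtheta t = 2 * t - 20/3 * t^3"

definition dx_psi_on_cell :: "nat \<Rightarrow> nat \<Rightarrow> nat \<Rightarrow> real \<Rightarrow> real" where
  "dx_psi_on_cell N a b x = 3/8 * dtheta (2 / mesh N * (x - fst (center N a b))) * (2 / mesh N)"

lemma theta_has_derivative: "(theta has_real_derivative dtheta t) (at t)"
  unfolding theta_def dtheta_def by (auto intro!: derivative_eq_intros)

lemma psi2_hat_on_cell_has_derivative_x:
  "((\<lambda>t. psi2_hat (Finv N a b (t, y))) has_real_derivative dx_psi_on_cell N a b x) (at x)"
proof -
  define m where "m = 2 / mesh N"
  define c where "c = fst (center N a b)"
  define Y where "Y = m * (y - snd (center N a b))"
  have "(\<lambda>t. psi2_hat (Finv N a b (t, y))) = (\<lambda>t. (1/4 + 1/2 * Y - 3/8 * theta Y) + 3/8 * theta (m * (t - c)))"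
    by (auto simp: psi2_hat_def Finv_def m_def c_def Y_def algebra_simps)
  moreover have "((\<lambda>t. theta (m * (t - c))) has_real_derivative dtheta (m * (x - c)) * m) (at x)"
    by (rule DERIV_chain2[OF theta_has_derivative]) (auto intro!: derivative_eq_intros)
  then have "((\<lambda>t. (1/4 + 1/2 * Y - 3/8 * theta Y) + 3/8 * theta (m * (t - c))) has_real_derivative
      0 + 3/8 * (dtheta (m * (x - c)) * m)) (at x)"
    by (intro DERIV_add DERIV_const DERIV_cmult)
  ultimately show ?thesis
    by (simp add: dx_psi_on_cell_def m_def c_def)
qed

lemma dtheta_minus: "dtheta (- t) = - dtheta t"
  by (simp add: dtheta_def)

lemma dx_psi_on_cell_reflect:
  "dx_psi_on_cell N a b ((real a - 1) * mesh N + real a * mesh N - x) = - dx_psi_on_cell N a b x"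
proof -
  have "2 / mesh N * ((real a - 1) * mesh N + real a * mesh N - x - fst (center N a b))
      = - (2 / mesh N * (x - fst (center N a b)))"
    by (simp add: center_def algebra_simps)
  then show ?thesis
    unfolding dx_psi_on_cell_def by (simp add: dtheta_minus)
qed

definition corner_weight :: "nat \<Rightarrow> nat \<Rightarrow> nat \<Rightarrow> real" where
  "corner_weight N a b = of_bool (a = 1 \<and> b = N) + of_bool (a = N \<and> b = N)"

lemma uh1_on_cell:
  assumes "N > 0" "a \<in> {1..N}" "b \<in> {1..N}" "p \<in> sq N a b"
  shows "uh1 N xi p = (\<Sum>j=1..N-1. \<Sum>k=1..N-1. xi j k * phi_on_cell N j k a b p)
     + 1/2 * ((\<Sum>j=1..N-1. phi_on_cell N j N a b p) + corner_weight N a b * psi2_hat (Finv N a b p))"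
proof -
  have "psi2_TL N p + psi2_TR N p = corner_weight N a b * psi2_hat (Finv N a b p)"
    using assms(1,4) by (auto simp: psi2_TL_def psi2_TR_def corner_weight_def indicator_sq)
  then show ?thesis
    using assms by (simp add: uh1_def phi_eq_phi_on_cell)
qed

lemma uh2_on_cell:
  assumes "N > 0" "a \<in> {1..N}" "b \<in> {1..N}" "p \<in> sq N a b"
  shows "uh2 N eta p = (\<Sum>j=1..N-1. \<Sum>k=1..N-1. eta j k * phi_on_cell N j k a b p)"
  using assms by (simp add: uh2_def phi_eq_phi_on_cell)

definition div_on_cell ::
    "nat \<Rightarrow> (nat \<Rightarrow> nat \<Rightarrow> real) \<Rightarrow> (nat \<Rightarrow> nat \<Rightarrow> real) \<Rightarrow> nat \<Rightarrow> nat \<Rightarrow> real" where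
  "div_on_cell N xi eta a b =
     (\<Sum>j=1..N-1. \<Sum>k=1..N-1. xi j k * dx_phi_on_cell N j k a b)
     + 1/2 * (\<Sum>j=1..N-1. dx_phi_on_cell N j N a b)
     + (\<Sum>j=1..N-1. \<Sum>k=1..N-1. eta j k * dy_phi_on_cell N j k a b)"

lemma divh_on_cell:
  assumes "N > 0" "a \<in> {1..N}" "b \<in> {1..N}" "p \<in> sq N a b"
  shows "divh N xi eta p = div_on_cell N xi eta a b + corner_weight N a b / 2 * dx_psi_on_cell N a b (fst p)"
proof -
  obtain x y where p: "p = (x, y)"
    by (cases p)
  have "open (sq N a b)"
    by (simp add: sq_def open_box)
  then have "eventually (\<lambda>t. (t, y) \<in> sq N a b) (nhds x)" "eventually (\<lambda>t. (x, t) \<in> sq N a b) (nhds y)"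
    using assms(4) by (simp_all add: p eventually_nhds_Pair_left eventually_nhds_Pair_right)
  then have uh1_near: "eventually (\<lambda>t. uh1 N xi (t, y) =
      (\<Sum>j=1..N-1. \<Sum>k=1..N-1. xi j k * phi_on_cell N j k a b (t, y))
      + 1/2 * ((\<Sum>j=1..N-1. phi_on_cell N j N a b (t, y))
               + corner_weight N a b * psi2_hat (Finv N a b (t, y)))) (nhds x)"
    and uh2_near: "eventually (\<lambda>t. uh2 N eta (x, t) =
      (\<Sum>j=1..N-1. \<Sum>k=1..N-1. eta j k * phi_on_cell N j k a b (x, t))) (nhds y)"
    using assms uh1_on_cell uh2_on_cell by (auto elim!: eventually_mono)
  have "((\<lambda>t. uh1 N xi (t, y)) has_real_derivative
      (\<Sum>j=1..N-1. \<Sum>k=1..N-1. xi j k * dx_phi_on_cell N j k a b)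
      + 1/2 * ((\<Sum>j=1..N-1. dx_phi_on_cell N j N a b)
               + corner_weight N a b * dx_psi_on_cell N a b x)) (at x)"
    unfolding DERIV_cong_ev[OF refl uh1_near refl]
    by (intro DERIV_add DERIV_sum DERIV_cmult phi_on_cell_has_derivative_x
        psi2_hat_on_cell_has_derivative_x)
  moreover have "((\<lambda>t. uh2 N eta (x, t)) has_real_derivative
      (\<Sum>j=1..N-1. \<Sum>k=1..N-1. eta j k * dy_phi_on_cell N j k a b)) (at y)"
    unfolding DERIV_cong_ev[OF refl uh2_near refl]
    by (intro DERIV_sum DERIV_cmult phi_on_cell_has_derivative_y)
  ultimately show ?thesis
    by (simp add: divh_def p DERIV_imp_deriv div_on_cell_def algebra_simps)
qed

lemma integral_divh_sq:
  assumes "N > 0" "a \<in> {1..N}" "b \<in> {1..N}"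
  shows "integral (sq N a b) (divh N xi eta) = mesh N ^ 2 * div_on_cell N xi eta a b"
proof -
  define lo where "lo = ((real a - 1) * mesh N, (real b - 1) * mesh N)"
  define hi where "hi = (real a * mesh N, real b * mesh N)"
  define corner_part :: "real \<times> real \<Rightarrow> real"
    where "corner_part p = corner_weight N a b / 2 * dx_psi_on_cell N a b (fst p)" for p
  have "integral (sq N a b) (divh N xi eta) = integral (sq N a b) (\<lambda>p. div_on_cell N xi eta a b + corner_part p)"
    using assms by (intro integral_cong) (simp add: divh_on_cell corner_part_def)
  also have "\<dots> = integral (cbox lo hi) (\<lambda>p. div_on_cell N xi eta a b + corner_part p)"
    by (simp add: sq_def lo_def hi_def integral_open_interval)
  also have "\<dots> = mesh N ^ 2 * div_on_cell N xi eta a b"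
  proof -
    have "(corner_part has_integral 0) (cbox lo hi)"
    proof (rule has_integral_antisymmetric_zero)
      show "corner_part integrable_on cbox lo hi"
        unfolding corner_part_def dx_psi_on_cell_def dtheta_def
        by (intro integrable_continuous continuous_intros)
      show "corner_part (lo + hi - p) = - corner_part p" for p
        using dx_psi_on_cell_reflect by (simp add: corner_part_def lo_def hi_def)
    qed
    moreover have "((\<lambda>p. div_on_cell N xi eta a b) has_integral mesh N ^ 2 * div_on_cell N xi eta a b) (cbox lo hi)"
      using has_integral_const[of "div_on_cell N xi eta a b" lo hi] mesh_pos[OF assms(1)]
      by (simp add: lo_def hi_def content_Pair power2_eq_square algebra_simps)
    ultimately have "((\<lambda>p. div_on_cell N xi eta a b + corner_part p) has_integral
        mesh N ^ 2 * div_on_cell N xi eta a b + 0) (cbox lo hi)"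
      by (intro has_integral_add)
    then show ?thesis
      by (simp add: integral_unique)
  qed
  finally show ?thesis .
qed

lemma sum_sum_restrict:
  fixes w f :: "'a \<Rightarrow> 'b \<Rightarrow> 'c::comm_semiring_0"
  assumes "finite A" "finite B"
  shows "(\<Sum>a\<in>A. \<Sum>b\<in>B. w a b * (if a \<in> S \<and> b \<in> T then f a b else 0))
       = (\<Sum>a\<in>A \<inter> S. \<Sum>b\<in>B \<inter> T. w a b * f a b)"
proof -
  have "(\<Sum>a\<in>A \<inter> S. \<Sum>b\<in>B \<inter> T. w a b * f a b)
      = (\<Sum>a\<in>A. if a \<in> S then (\<Sum>b\<in>B. if b \<in> T then w a b * f a b else 0) else 0)"
    using assms by (simp add: sum.inter_restrict)
  also have "\<dots> = (\<Sum>a\<in>A. \<Sum>b\<in>B. w a b * (if a \<in> S \<and> b \<in> T then f a b else 0))"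
    by (intro sum.cong refl) (simp add: if_distrib[of "(*) _"] cong: if_cong)
  finally show ?thesis ..
qed

lemma weighted_sum_dx_phi_on_cell:
  assumes "j \<in> {1..N-1}" "k \<in> {1..N-1}"
  shows "(\<Sum>a=1..N. \<Sum>b=1..N. w a b * dx_phi_on_cell N j k a b)
       = real N * (w j k + w j (k+1) - w (j+1) k - w (j+1) (k+1))"
proof -
  have "{1..N} \<inter> {j, j+1} = {j, j+1}" "{1..N} \<inter> {k, k+1} = {k, k+1}"
    using assms by auto
  then show ?thesis
    unfolding dx_phi_on_cell_def sum_sum_restrict[OF finite_atLeastAtMost finite_atLeastAtMost]
    by (simp add: algebra_simps)
qed

lemma weighted_sum_dy_phi_on_cell:
  assumes "j \<in> {1..N-1}" "k \<in> {1..N-1}"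
  shows "(\<Sum>a=1..N. \<Sum>b=1..N. w a b * dy_phi_on_cell N j k a b)
       = real N * (w j k + w (j+1) k - w j (k+1) - w (j+1) (k+1))"
proof -
  have "{1..N} \<inter> {j, j+1} = {j, j+1}" "{1..N} \<inter> {k, k+1} = {k, k+1}"
    using assms by auto
  then show ?thesis
    unfolding dy_phi_on_cell_def sum_sum_restrict[OF finite_atLeastAtMost finite_atLeastAtMost]
    by (simp add: algebra_simps)
qed

lemma weighted_sum_dx_phi_on_cell_top:
  assumes "j \<in> {1..N-1}"
  shows "(\<Sum>a=1..N. \<Sum>b=1..N. w a b * dx_phi_on_cell N j N a b) = real N * (w j N - w (j+1) N)"
proof -
  have "{1..N} \<inter> {j, j+1} = {j, j+1}" "{1..N} \<inter> {N, N+1} = {N}"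
    using assms by auto
  then show ?thesis
    unfolding dx_phi_on_cell_def sum_sum_restrict[OF finite_atLeastAtMost finite_atLeastAtMost]
    by (simp add: algebra_simps)
qed

lemma sum_sum_mult_sum_sum_swap:
  fixes w c :: "'a \<Rightarrow> 'b \<Rightarrow> 'c::comm_semiring_0"
  shows "(\<Sum>a\<in>A. \<Sum>b\<in>B. w a b * (\<Sum>j\<in>J. \<Sum>k\<in>K. c j k * f j k a b))
       = (\<Sum>j\<in>J. \<Sum>k\<in>K. c j k * (\<Sum>a\<in>A. \<Sum>b\<in>B. w a b * f j k a b))"
proof -
  have "(\<Sum>a\<in>A. \<Sum>b\<in>B. w a b * (\<Sum>j\<in>J. \<Sum>k\<in>K. c j k * f j k a b))
      = (\<Sum>a\<in>A. \<Sum>b\<in>B. \<Sum>j\<in>J. \<Sum>k\<in>K. c j k * (w a b * f j k a b))"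
    by (simp add: sum_distrib_left mult.left_commute)
  also have "\<dots> = (\<Sum>a\<in>A. \<Sum>j\<in>J. \<Sum>b\<in>B. \<Sum>k\<in>K. c j k * (w a b * f j k a b))"
    by (rule sum.cong[OF refl], rule sum.swap)
  also have "\<dots> = (\<Sum>a\<in>A. \<Sum>j\<in>J. \<Sum>k\<in>K. \<Sum>b\<in>B. c j k * (w a b * f j k a b))"
    by (rule sum.cong[OF refl], rule sum.cong[OF refl], rule sum.swap)
  also have "\<dots> = (\<Sum>j\<in>J. \<Sum>a\<in>A. \<Sum>k\<in>K. \<Sum>b\<in>B. c j k * (w a b * f j k a b))"
    by (rule sum.swap)
  also have "\<dots> = (\<Sum>j\<in>J. \<Sum>k\<in>K. \<Sum>a\<in>A. \<Sum>b\<in>B. c j k * (w a b * f j k a b))"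
    by (rule sum.cong[OF refl], rule sum.swap)
  finally show ?thesis
    by (simp add: sum_distrib_left)
qed

lemma weighted_sum_div_on_cell:
  "(\<Sum>a=1..N. \<Sum>b=1..N. w a b * div_on_cell N xi eta a b)
     = real N * ((\<Sum>j=1..N-1. \<Sum>k=1..N-1. xi j k * (w j k + w j (k+1) - w (j+1) k - w (j+1) (k+1)))
         + 1/2 * (\<Sum>j=1..N-1. w j N - w (j+1) N)
         + (\<Sum>j=1..N-1. \<Sum>k=1..N-1. eta j k * (w j k + w (j+1) k - w j (k+1) - w (j+1) (k+1))))"
proof -
  have xi_part: "(\<Sum>a=1..N. \<Sum>b=1..N. w a b * (\<Sum>j=1..N-1. \<Sum>k=1..N-1. xi j k * dx_phi_on_cell N j k a b))
      = (\<Sum>j=1..N-1. \<Sum>k=1..N-1. xi j k * (real N * (w j k + w j (k+1) - w (j+1) k - w (j+1) (k+1))))"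
    by (rule trans[OF sum_sum_mult_sum_sum_swap])
      (intro sum.cong refl arg_cong2[where f = "(*)"] weighted_sum_dx_phi_on_cell)
  have eta_part: "(\<Sum>a=1..N. \<Sum>b=1..N. w a b * (\<Sum>j=1..N-1. \<Sum>k=1..N-1. eta j k * dy_phi_on_cell N j k a b))
      = (\<Sum>j=1..N-1. \<Sum>k=1..N-1. eta j k * (real N * (w j k + w (j+1) k - w j (k+1) - w (j+1) (k+1))))"
    by (rule trans[OF sum_sum_mult_sum_sum_swap])
      (intro sum.cong refl arg_cong2[where f = "(*)"] weighted_sum_dy_phi_on_cell)
  have "(\<Sum>a=1..N. \<Sum>b=1..N. w a b * (\<Sum>j=1..N-1. dx_phi_on_cell N j N a b))
      = (\<Sum>a=1..N. \<Sum>j=1..N-1. \<Sum>b=1..N. w a b * dx_phi_on_cell N j N a b)"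
    by (simp only: sum_distrib_left) (rule sum.cong[OF refl], rule sum.swap)
  also have "\<dots> = (\<Sum>j=1..N-1. \<Sum>a=1..N. \<Sum>b=1..N. w a b * dx_phi_on_cell N j N a b)"
    by (rule sum.swap)
  also have "\<dots> = (\<Sum>j=1..N-1. real N * (w j N - w (j+1) N))"
    by (intro sum.cong refl weighted_sum_dx_phi_on_cell_top)
  finally have top_part: "(\<Sum>a=1..N. \<Sum>b=1..N. w a b * (\<Sum>j=1..N-1. dx_phi_on_cell N j N a b))
      = (\<Sum>j=1..N-1. real N * (w j N - w (j+1) N))" .
  have "(\<Sum>a=1..N. \<Sum>b=1..N. w a b * div_on_cell N xi eta a b)
      = (\<Sum>a=1..N. \<Sum>b=1..N. w a b * (\<Sum>j=1..N-1. \<Sum>k=1..N-1. xi j k * dx_phi_on_cell N j k a b))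
        + 1/2 * (\<Sum>a=1..N. \<Sum>b=1..N. w a b * (\<Sum>j=1..N-1. dx_phi_on_cell N j N a b))
        + (\<Sum>a=1..N. \<Sum>b=1..N. w a b * (\<Sum>j=1..N-1. \<Sum>k=1..N-1. eta j k * dy_phi_on_cell N j k a b))"
    unfolding div_on_cell_def distrib_left sum.distrib by (simp add: sum_distrib_left mult.left_commute)
  then show ?thesis
    unfolding xi_part top_part eta_part by (simp add: sum_distrib_left algebra_simps)
qed

lemma sum_div_on_cell: "(\<Sum>a=1..N. \<Sum>b=1..N. div_on_cell N xi eta a b) = 0"
  using weighted_sum_div_on_cell[of "\<lambda>a b. 1"] by simp

lemma sum_neg_one_power: "(\<Sum>i=1..n. (-1::real) ^ i) = (if even n then 0 else -1)"
  by (induction n) auto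

lemma alternating_sum_div_on_cell:
  assumes "even N"
  shows "(\<Sum>a=1..N. \<Sum>b=1..N. (-1) ^ (a+b) * div_on_cell N xi eta a b) = - real N"
proof -
  have "(\<Sum>j=1..N-1. (-1::real) ^ (j+N) - (-1) ^ (j+1+N)) = 2 * (\<Sum>j=1..N-1. (-1) ^ j)"
    using assms by (simp add: sum_distrib_left power_add)
  also have "\<dots> = (if N = 0 then 0 else -2)"
    using assms sum_neg_one_power[of "N - 1"] by auto
  finally show ?thesis
    using weighted_sum_div_on_cell[of "\<lambda>a b. (-1) ^ (a+b)" N xi eta]
    by (auto simp: power_add split: if_splits)
qed

lemma sum_sum_mult_indicator_pair:
  fixes c :: "'a \<Rightarrow> 'b \<Rightarrow> 'c::comm_semiring_1"
  assumes "finite A" "finite B" "a \<in> A" "b \<in> B"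
  shows "(\<Sum>j\<in>A. \<Sum>k\<in>B. c j k * of_bool (j = a \<and> k = b)) = c a b"
proof -
  have "(\<Sum>j\<in>A. \<Sum>k\<in>B. c j k * of_bool (j = a \<and> k = b))
      = (\<Sum>j\<in>A. if j = a then (\<Sum>k\<in>B. if k = b then c j k else 0) else 0)"
    by (intro sum.cong refl) (auto intro: sum.cong)
  with assms show ?thesis
    by simp
qed

lemma sum_sum_mult_indicator_diff:
  fixes c :: "nat \<Rightarrow> nat \<Rightarrow> real"
  assumes "a \<in> {1..N}" "b \<in> {1..N}" "a' \<in> {1..N}" "b' \<in> {1..N}"
  shows "(\<Sum>j=1..N. \<Sum>k=1..N. c j k * (of_bool (j = a \<and> k = b) - of_bool (j = a' \<and> k = b')))
       = c a b - c a' b'"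
proof -
  have "(\<Sum>j=1..N. \<Sum>k=1..N. c j k * (of_bool (j = a \<and> k = b) - of_bool (j = a' \<and> k = b')))
      = (\<Sum>j=1..N. \<Sum>k=1..N. c j k * of_bool (j = a \<and> k = b))
        - (\<Sum>j=1..N. \<Sum>k=1..N. c j k * of_bool (j = a' \<and> k = b'))"
    by (simp add: right_diff_distrib sum_subtractf)
  also have "\<dots> = c a b - c a' b'"
    using assms by (simp only: sum_sum_mult_indicator_pair[OF finite_atLeastAtMost finite_atLeastAtMost])
  finally show ?thesis .
qed

lemma pressure_space_indicator_diff:
  assumes "a \<in> {1..N}" "b \<in> {1..N}" "a' \<in> {1..N}" "b' \<in> {1..N}" "even (a+b) = even (a'+b')"
  shows "pressure_space N (\<lambda>j k. of_bool (j = a \<and> k = b) - of_bool (j = a' \<and> k = b'))"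
    (is "pressure_space N ?q")
proof -
  have colour_sum: "(\<Sum>j=1..N. \<Sum>k=1..N. if P (j+k) then ?q j k * (mesh N)^2 else 0) = 0"
    if "P (a+b) = P (a'+b')" for P :: "nat \<Rightarrow> bool"
  proof -
    have "(\<Sum>j=1..N. \<Sum>k=1..N. if P (j+k) then ?q j k * (mesh N)^2 else 0)
        = (\<Sum>j=1..N. \<Sum>k=1..N. (if P (j+k) then (mesh N)^2 else 0) * ?q j k)"
      by (intro sum.cong refl) simp
    with that show ?thesis
      using sum_sum_mult_indicator_diff[OF assms(1-4)] by simp
  qed
  have "odd (a+b) = odd (a'+b')"
    using assms(5) by simp
  with colour_sum[of even, OF assms(5)] colour_sum[of odd] show ?thesis
    unfolding pressure_space_def by simp
qed

lemma pressure_orthogonal_same_colour: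
  fixes D :: "nat \<Rightarrow> nat \<Rightarrow> real"
  assumes "\<forall>q. pressure_space N q \<longrightarrow> (\<Sum>j=1..N. \<Sum>k=1..N. D j k * q j k) = 0"
    and "a \<in> {1..N}" "b \<in> {1..N}" "a' \<in> {1..N}" "b' \<in> {1..N}" "even (a+b) = even (a'+b')"
  shows "D a b = D a' b'"
  using assms(1) pressure_space_indicator_diff[OF assms(2-6)] sum_sum_mult_indicator_diff[OF assms(2-5), of D]
  by simp

lemma pressure_orthogonal_two_valued:
  fixes D :: "nat \<Rightarrow> nat \<Rightarrow> real"
  assumes "\<forall>q. pressure_space N q \<longrightarrow> (\<Sum>j=1..N. \<Sum>k=1..N. D j k * q j k) = 0"
  obtains R B where "\<And>a b. a \<in> {1..N} \<Longrightarrow> b \<in> {1..N} \<Longrightarrow> D a b = (if even (a+b) then R else B)"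
proof (rule that[of "D 1 1" "D 2 1"])
  fix a b
  assume ab: "a \<in> {1..N}" "b \<in> {1..N}"
  show "D a b = (if even (a+b) then D 1 1 else D 2 1)"
  proof (cases "even (a+b)")
    case True
    with ab show ?thesis
      using pressure_orthogonal_same_colour[OF assms, of a b 1 1] by auto
  next
    case False
    then have "2 \<le> N"
      using ab by (cases "N = 1") auto
    with False ab show ?thesis
      using pressure_orthogonal_same_colour[OF assms, of a b 2 1] by auto
  qed
qed

lemma two_coloured_zero_sum:
  fixes D :: "nat \<Rightarrow> nat \<Rightarrow> real"
  assumes "even N" "N > 0"
    and D: "\<And>a b. a \<in> {1..N} \<Longrightarrow> b \<in> {1..N} \<Longrightarrow> D a b = (if even (a+b) then R else B)"
    and "(\<Sum>a=1..N. \<Sum>b=1..N. D a b) = 0"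
  shows "B = - R" and "(\<Sum>a=1..N. \<Sum>b=1..N. (-1) ^ (a+b) * D a b) = real N ^ 2 * R"
proof -
  have signs: "(\<Sum>a=1..N. \<Sum>b=1..N. (-1::real) ^ (a+b)) = 0"
    using sum_neg_one_power[of N] assms(1) by (simp add: power_add sum_product[symmetric])
  have "D a b = (R + B) / 2 + (R - B) / 2 * (-1) ^ (a+b)" if "a \<in> {1..N}" "b \<in> {1..N}" for a b
    using D[OF that] by (auto simp: field_simps)
  then have "(\<Sum>a=1..N. \<Sum>b=1..N. D a b)
      = (\<Sum>a=1..N. \<Sum>b=1..N. (R + B) / 2 + (R - B) / 2 * (-1) ^ (a+b))"
    by (intro sum.cong refl) simp
  also have "\<dots> = real N ^ 2 * ((R + B) / 2)"
    using signs by (simp add: sum.distrib sum_divide_distrib[symmetric] sum_distrib_left[symmetric] power2_eq_square)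
  finally show "B = - R"
    using assms(2,4) by simp
  then have "(-1) ^ (a+b) * D a b = R" if "a \<in> {1..N}" "b \<in> {1..N}" for a b
    using D[OF that] by simp
  then have "(\<Sum>a=1..N. \<Sum>b=1..N. (-1) ^ (a+b) * D a b) = (\<Sum>a=1..N. \<Sum>b=1..N. R)"
    by (intro sum.cong refl) simp
  then show "(\<Sum>a=1..N. \<Sum>b=1..N. (-1) ^ (a+b) * D a b) = real N ^ 2 * R"
    by (simp add: power2_eq_square)
qed

theorem theorem4p1:
  fixes N :: nat and xi eta :: "nat \<Rightarrow> nat \<Rightarrow> real"
  assumes "N > 0" and "even N"
    and "\<forall>q. pressure_space N q \<longrightarrow>
           (\<Sum>j=1..N. \<Sum>k=1..N. integral (sq N j k) (\<lambda>p. divh N xi eta p * q j k)) = 0"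
  shows "(\<forall>j\<in>{1..N}. \<forall>k\<in>{1..N}. \<bar>integral (sq N j k) (divh N xi eta)\<bar> = (mesh N)^3)
       \<and> (\<exists>\<gamma>. \<bar>\<gamma>\<bar> = (mesh N)^3 \<and>
            (\<forall>j\<in>{1..N}. \<forall>k\<in>{1..N}.
               integral (sq N j k) (divh N xi eta) = (if even (j+k) then \<gamma> else - \<gamma>)))"
proof -
  define D where "D j k = integral (sq N j k) (divh N xi eta)" for j k
  have D_cell: "D a b = mesh N ^ 2 * div_on_cell N xi eta a b" if "a \<in> {1..N}" "b \<in> {1..N}" for a b
    using integral_divh_sq[OF assms(1) that] by (simp add: D_def)
  have "\<forall>q. pressure_space N q \<longrightarrow> (\<Sum>j=1..N. \<Sum>k=1..N. D j k * q j k) = 0"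
    using assms(3) by (simp add: D_def)
  then obtain R B
    where RB: "\<And>a b. a \<in> {1..N} \<Longrightarrow> b \<in> {1..N} \<Longrightarrow> D a b = (if even (a+b) then R else B)"
    using pressure_orthogonal_two_valued by blast
  have "(\<Sum>a=1..N. \<Sum>b=1..N. D a b) = mesh N ^ 2 * (\<Sum>a=1..N. \<Sum>b=1..N. div_on_cell N xi eta a b)"
    by (simp add: D_cell sum_distrib_left)
  then have "B = - R" and alternating: "(\<Sum>a=1..N. \<Sum>b=1..N. (-1) ^ (a+b) * D a b) = real N ^ 2 * R"
    using two_coloured_zero_sum[OF assms(2,1) RB] sum_div_on_cell by simp_all
  have "(\<Sum>a=1..N. \<Sum>b=1..N. (-1) ^ (a+b) * D a b)
      = mesh N ^ 2 * (\<Sum>a=1..N. \<Sum>b=1..N. (-1) ^ (a+b) * div_on_cell N xi eta a b)"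
    by (simp add: D_cell sum_distrib_left mult.left_commute)
  also have "\<dots> = - (mesh N ^ 2 * real N)"
    unfolding alternating_sum_div_on_cell[OF assms(2)] by simp
  finally have "(\<Sum>a=1..N. \<Sum>b=1..N. (-1) ^ (a+b) * D a b) = - (mesh N ^ 2 * real N)" .
  with alternating have "R = - (mesh N ^ 3)"
    using assms(1) by (simp add: mesh_def power2_eq_square power3_eq_cube field_simps)
  with RB \<open>B = - R\<close> mesh_pos[OF assms(1)] show ?thesis
    by (auto simp: D_def intro!: exI[of _ R])
qed

end
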